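(* Let $G\sim\mathcal{G}(n,p)$ with $n\cdot p\to 0$ as $n\to\infty$. Then the average complexity of best-first branch-and-bound with potentials for maximum independent set on $G$ is subexponential in $n$.
   Context: $\mathcal{G}(n,p)$ is the binomial random graph on $n$ vertices in which each of the $\binom{n}{2}$ pairs of vertices is an edge with probability $p$, independently. The branch-and-bound algorithm processes the vertices in a fixed order $v_1,\dots,v_n$; a node at level $i$ of the binary search tree corresponds to a partial solution $S\subseteq\{v_1,\dots,v_i\}$, with children $S\cup\{v_{i+1}\}$ and $S$, and has potential $u(S)=|S|+n-i$. Nodes whose partial solution is not independent are discarded; the algorithm always expands an unexplored node of largest potential; the first complete solution reached is returned and all other branches pruned. The average complexity is the expected number of nodes handled. *)

theory Defs
  imports "HOL-Probability.Probability"
begin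

text \<open>Vertices of a graph on n vertices are 0,...,n-1; vertex v_(i+1) of the paper is i.
  A graph is a predicate on ordered pairs (i,j) with i < j < n (edge indicator).\<close>

definition vertex_pairs :: "nat \<Rightarrow> (nat \<times> nat) set" where
  "vertex_pairs n = {(i, j). i < j \<and> j < n}"

definition gnp :: "nat \<Rightarrow> real \<Rightarrow> (nat \<times> nat \<Rightarrow> bool) pmf" where
  "gnp n p = Pi_pmf (vertex_pairs n) False (\<lambda>_. bernoulli_pmf p)"

definition adj :: "(nat \<times> nat \<Rightarrow> bool) \<Rightarrow> nat \<Rightarrow> nat \<Rightarrow> bool" where
  "adj G u v \<longleftrightarrow> u \<noteq> v \<and> G (min u v, max u v)"

definition indep :: "(nat \<times> nat \<Rightarrow> bool) \<Rightarrow> nat set \<Rightarrow> bool" where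
  "indep G S \<longleftrightarrow> (\<forall>u\<in>S. \<forall>v\<in>S. \<not> adj G u v)"

text \<open>A search-tree node at level i with partial solution S \<subseteq> {v_1..v_i} is the pair (i, S).\<close>
type_synonym bbnode = "nat \<times> nat set"

definition potential :: "nat \<Rightarrow> bbnode \<Rightarrow> nat" where
  "potential n x = card (snd x) + (n - fst x)"

definition children :: "bbnode \<Rightarrow> bbnode set" where
  "children x = {(Suc (fst x), insert (fst x) (snd x)), (Suc (fst x), snd x)}"

definition best_first_rule :: "(nat \<Rightarrow> bbnode set \<Rightarrow> bbnode) \<Rightarrow> bool" where
  "best_first_rule sel \<longleftrightarrow>
     (\<forall>n F. finite F \<and> F \<noteq> {} \<longrightarrow>
        sel n F \<in> F \<and> (\<forall>y\<in>F. potential n y \<le> potential n (sel n F)))"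

text \<open>Returns the number of nodes handled after the root:
  each expansion of a node handles its two children (independent ones are kept in the
  frontier, others discarded). The search stops as soon as the selected node is a
  complete solution (level n); all remaining branches are pruned.\<close>
fun bb_loop :: "(nat \<Rightarrow> bbnode set \<Rightarrow> bbnode) \<Rightarrow> (nat \<times> nat \<Rightarrow> bool) \<Rightarrow> nat
                  \<Rightarrow> nat \<Rightarrow> bbnode set \<Rightarrow> nat" where
  "bb_loop sel G n 0 F = 0"
| "bb_loop sel G n (Suc k) F =
     (if F = {} then 0 else
      (let x = sel n F in
        if fst x = n then 0
        else 2 + bb_loop sel G n k ((F - {x}) \<union> {c \<in> children x. indep G (snd c)})))"

text \<open>The fuel 2^(n+1) exceeds the number of nodes of
  the binary search tree, so it never runs out (every node is expanded at most once).\<close>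
definition bb_nodes :: "(nat \<Rightarrow> bbnode set \<Rightarrow> bbnode) \<Rightarrow> nat \<Rightarrow> (nat \<times> nat \<Rightarrow> bool) \<Rightarrow> nat" where
  "bb_nodes sel n G = 1 + bb_loop sel G n (2 ^ (n + 1)) {(0, {})}"

definition avg_complexity :: "(nat \<Rightarrow> bbnode set \<Rightarrow> bbnode) \<Rightarrow> nat \<Rightarrow> real \<Rightarrow> real" where
  "avg_complexity sel n p = measure_pmf.expectation (gnp n p) (\<lambda>G. real (bb_nodes sel n G))"

definition subexponential :: "(nat \<Rightarrow> real) \<Rightarrow> bool" where
  "subexponential f \<longleftrightarrow> (\<forall>\<epsilon>>0. \<forall>\<^sub>F n in sequentially. f n \<le> exp (\<epsilon> * real n))"

end

theory Submission
  imports Defs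
begin

text \<open>Fix any independent set \<open>T\<close> of \<open>G\<close>. Some prefix \<open>T \<inter> {..<i}\<close> of it is always on the
  frontier and has potential at least \<open>|T|\<close>, so best-first search only expands nodes of potential
  at least \<open>|T|\<close>, each at most once. A node \<open>(i, S)\<close> of potential at least \<open>n - d\<close> is determined
  by \<open>i\<close> and a set of at most \<open>d\<close> rejected vertices, and there are at most \<open>(1 + t)\<^sup>n / t\<^sup>d\<close> such
  sets for every \<open>0 < t \<le> 1\<close>. Taking for \<open>T\<close> the vertices without a smaller neighbour gives
  \<open>d \<le> m\<close>, the number of edges, and \<open>E (1 / t) ^ m \<le> exp (n\<^sup>2 p / t)\<close>. Hence the average
  complexity is at most \<open>(1 + 2n) exp (n (t + n p / t))\<close>, which is \<open>exp (o(n))\<close> when \<open>n p \<rightarrow> 0\<close>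
  upon choosing \<open>t\<close> small.\<close>

definition tree_node :: "nat \<Rightarrow> bbnode \<Rightarrow> bool" where
  "tree_node n x \<longleftrightarrow> snd x \<subseteq> {..<fst x} \<and> fst x \<le> n"

definition parent :: "bbnode \<Rightarrow> bbnode" where
  "parent x = (fst x - 1, snd x - {fst x - 1})"

lemma fst_child: "c \<in> children x \<Longrightarrow> fst c = Suc (fst x)"
  by (auto simp: children_def)

lemma parent_child: "snd x \<subseteq> {..<fst x} \<Longrightarrow> c \<in> children x \<Longrightarrow> parent c = x"
  by (cases x) (auto simp: children_def parent_def)

lemma tree_node_child: "tree_node n x \<Longrightarrow> fst x < n \<Longrightarrow> c \<in> children x \<Longrightarrow> tree_node n c"
  by (auto simp: tree_node_def children_def)

lemma prefix_child: "(Suc i, T \<inter> {..<Suc i}) \<in> children (i, T \<inter> {..<i})"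
  by (auto simp: children_def lessThan_Suc)

lemma indep_subset: "indep G T \<Longrightarrow> S \<subseteq> T \<Longrightarrow> indep G S"
  unfolding indep_def by blast

lemma card_le_potential_prefix:
  assumes "T \<subseteq> {..<n}"
  shows "card T \<le> potential n (i, T \<inter> {..<i})"
proof -
  have "card T \<le> card (T \<inter> {..<i} \<union> {i..<n})"
    using assms by (intro card_mono) auto
  also have "\<dots> \<le> card (T \<inter> {..<i}) + card {i..<n}"
    by (rule card_Un_le)
  finally show ?thesis
    by (simp add: potential_def)
qed

text \<open>\<open>E\<close> is the set of expanded nodes and \<open>F\<close> the frontier. Keeping parents of all nodes in
  \<open>E\<close> ensures that a newly generated child was never expanded before.\<close>

definition search_invariant :: "nat \<Rightarrow> nat set \<Rightarrow> bbnode set \<Rightarrow> bbnode set \<Rightarrow> bool" where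
  "search_invariant n T E F \<longleftrightarrow> finite F \<and> F \<inter> E = {} \<and>
     (\<forall>x\<in>E \<union> F. tree_node n x \<and> (fst x \<noteq> 0 \<longrightarrow> parent x \<in> E)) \<and>
     (\<exists>i. (i, T \<inter> {..<i}) \<in> F)"

lemma search_invariant_init: "search_invariant n T {} {(0, {})}"
  by (auto simp: search_invariant_def tree_node_def intro!: exI[of _ 0])

lemma search_invariant_expand:
  assumes inv: "search_invariant n T E F" and T: "indep G T" and x: "x \<in> F" "fst x < n"
  shows "search_invariant n T (insert x E) (F - {x} \<union> {c \<in> children x. indep G (snd c)})"
proof -
  have nodes: "\<forall>y\<in>E \<union> F. tree_node n y \<and> (fst y \<noteq> 0 \<longrightarrow> parent y \<in> E)"
    and disjoint: "F \<inter> E = {}" and "finite F"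
    using inv by (auto simp: search_invariant_def)
  have tx: "tree_node n x"
    using nodes x by blast
  have parent_x: "parent c = x" if "c \<in> children x" for c
    using parent_child tx that by (auto simp: tree_node_def)
  have fresh: "c \<notin> insert x E" if "c \<in> children x" for c
    using fst_child[OF that] parent_x[OF that] nodes disjoint x by force
  have prefix: "\<exists>i. (i, T \<inter> {..<i}) \<in> F - {x} \<union> {c \<in> children x. indep G (snd c)}"
  proof -
    obtain i where i: "(i, T \<inter> {..<i}) \<in> F"
      using inv by (auto simp: search_invariant_def)
    show ?thesis
    proof (cases "x = (i, T \<inter> {..<i})")
      case True
      then have "(Suc i, T \<inter> {..<Suc i}) \<in> {c \<in> children x. indep G (snd c)}"
        using prefix_child indep_subset[OF T] by auto
      then show ?thesis by blast
    qed (use i in blast)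
  qed
  have "finite (children x)"
    by (simp add: children_def)
  moreover have "(F - {x} \<union> {c \<in> children x. indep G (snd c)}) \<inter> insert x E = {}"
    using disjoint fresh by blast
  moreover have "\<forall>y\<in>insert x E \<union> (F - {x} \<union> {c \<in> children x. indep G (snd c)}).
      tree_node n y \<and> (fst y \<noteq> 0 \<longrightarrow> parent y \<in> insert x E)"
    using nodes x(1) tree_node_child[OF tx x(2)] parent_x by blast
  ultimately show ?thesis
    using \<open>finite F\<close> prefix by (simp add: search_invariant_def)
qed

definition high_potential_nodes :: "nat \<Rightarrow> nat \<Rightarrow> bbnode set" where
  "high_potential_nodes n a = {x. tree_node n x \<and> fst x < n \<and> a \<le> potential n x}"

lemma finite_high_potential_nodes: "finite (high_potential_nodes n a)"
  by (rule finite_subset[of _ "{..<n} \<times> Pow {..<n}"])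
     (auto simp: high_potential_nodes_def tree_node_def)

lemma bb_loop_le_unexpanded:
  assumes sel: "best_first_rule sel" and T: "T \<subseteq> {..<n}" "indep G T"
  shows "search_invariant n T E F \<Longrightarrow> E \<subseteq> high_potential_nodes n (card T) \<Longrightarrow>
    bb_loop sel G n k F \<le> 2 * card (high_potential_nodes n (card T) - E)"
proof (induction k arbitrary: E F)
  case 0
  then show ?case by simp
next
  case (Suc k)
  let ?H = "high_potential_nodes n (card T)"
  define x where "x = sel n F"
  define F' where "F' = F - {x} \<union> {c \<in> children x. indep G (snd c)}"
  show ?case
  proof (cases "F = {} \<or> fst x = n")
    case True
    then show ?thesis by (auto simp: x_def Let_def)
  next
    case False
    have "finite F"
      using Suc.prems(1) by (simp add: search_invariant_def)
    then have xF: "x \<in> F" and x_max: "\<forall>y\<in>F. potential n y \<le> potential n x"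
      using sel False by (auto simp: best_first_rule_def x_def)
    obtain i where "(i, T \<inter> {..<i}) \<in> F"
      using Suc.prems(1) by (auto simp: search_invariant_def)
    then have "card T \<le> potential n x"
      using card_le_potential_prefix[OF T(1)] x_max le_trans by blast
    moreover have "tree_node n x" and "x \<notin> E"
      using Suc.prems(1) xF by (auto simp: search_invariant_def)
    ultimately have xH: "x \<in> ?H - E" and "fst x < n"
      using False by (auto simp: high_potential_nodes_def tree_node_def)
    then have "search_invariant n T (insert x E) F'"
      unfolding F'_def using search_invariant_expand Suc.prems(1) T(2) xF by blast
    then have "bb_loop sel G n k F' \<le> 2 * card (?H - insert x E)"
      using Suc.IH Suc.prems(2) xH by blast
    moreover have "card (?H - E) = Suc (card (?H - insert x E))"
      using card.remove[OF finite_Diff[OF finite_high_potential_nodes] xH]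
      by (simp add: Diff_insert[symmetric])
    moreover have "bb_loop sel G n (Suc k) F = 2 + bb_loop sel G n k F'"
      using False by (simp add: F'_def x_def Let_def)
    ultimately show ?thesis
      by linarith
  qed
qed

lemma bb_nodes_le_high_potential_nodes:
  assumes "best_first_rule sel" "T \<subseteq> {..<n}" "indep G T"
  shows "bb_nodes sel n G \<le> 1 + 2 * card (high_potential_nodes n (card T))"
  using bb_loop_le_unexpanded[OF assms search_invariant_init] by (simp add: bb_nodes_def)

lemma card_high_potential_nodes_le:
  "card (high_potential_nodes n a) \<le> n * card {D. D \<subseteq> {..<n} \<and> card D \<le> n - a}"
proof -
  let ?D = "{D. D \<subseteq> {..<n} \<and> card D \<le> n - a}"
  define rejected where "rejected = (\<lambda>(i :: nat, S). (i, {..<i} - S))"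
  have "inj_on rejected (high_potential_nodes n a)"
    by (rule inj_onI) (clarsimp simp: rejected_def high_potential_nodes_def tree_node_def; blast)
  moreover have "rejected ` high_potential_nodes n a \<subseteq> {..<n} \<times> ?D"
  proof
    fix y assume "y \<in> rejected ` high_potential_nodes n a"
    then obtain i S where "y = (i, {..<i} - S)" and "S \<subseteq> {..<i}" "i < n"
      and "a \<le> card S + (n - i)"
      by (auto simp: rejected_def high_potential_nodes_def tree_node_def potential_def)
    moreover have "card ({..<i} - S) = i - card S"
      using \<open>S \<subseteq> {..<i}\<close> by (simp add: card_Diff_subset finite_subset)
    ultimately show "y \<in> {..<n} \<times> ?D"
      by auto
  qed
  ultimately have "card (high_potential_nodes n a) \<le> card ({..<n} \<times> ?D)"
    by (intro card_inj_on_le) auto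
  also have "\<dots> = n * card ?D"
    by (simp add: card_cartesian_product)
  finally show ?thesis .
qed

lemma card_small_subsets_le:
  fixes t :: real
  assumes "finite A" "0 < t" "t \<le> 1"
  shows "card {D. D \<subseteq> A \<and> card D \<le> d} \<le> (1 + t) ^ card A / t ^ d"
proof -
  have "card {D. D \<subseteq> A \<and> card D \<le> d} = (\<Sum>D\<in>Pow A. if card D \<le> d then 1 else 0 :: real)"
    using assms(1) by (simp add: sum.If_cases Int_def)
  also have "\<dots> \<le> (\<Sum>D\<in>Pow A. t ^ card D / t ^ d)"
    using assms(2,3) by (intro sum_mono) (auto simp: field_simps power_decreasing)
  also have "\<dots> = (\<Prod>a\<in>A. t + 1) / t ^ d"
    using prod_add[OF assms(1), of "\<lambda>_. t" "\<lambda>_. 1"] by (simp add: sum_divide_distrib)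
  finally show ?thesis
    by (simp add: add.commute)
qed

text \<open>Orienting every edge from its smaller to its larger end, these are the sources.\<close>

definition sources :: "(nat \<times> nat \<Rightarrow> bool) \<Rightarrow> nat \<Rightarrow> nat set" where
  "sources G n = {v. v < n \<and> (\<forall>u<v. \<not> G (u, v))}"

definition edge_count :: "(nat \<times> nat \<Rightarrow> bool) \<Rightarrow> nat \<Rightarrow> nat" where
  "edge_count G n = card {e \<in> vertex_pairs n. G e}"

lemma sources_subset: "sources G n \<subseteq> {..<n}"
  by (auto simp: sources_def)

lemma indep_sources: "indep G (sources G n)"
  by (auto simp: indep_def adj_def sources_def min_def max_def split: if_splits)

lemma finite_vertex_pairs: "finite (vertex_pairs n)"
  by (rule finite_subset[of _ "{..<n} \<times> {..<n}"]) (auto simp: vertex_pairs_def)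

lemma card_vertex_pairs_le: "card (vertex_pairs n) \<le> n * n"
proof -
  have "card (vertex_pairs n) \<le> card ({..<n} \<times> {..<n})"
    by (rule card_mono) (auto simp: vertex_pairs_def)
  then show ?thesis
    by (simp add: card_cartesian_product)
qed

lemma card_sources_ge: "n - card (sources G n) \<le> edge_count G n"
proof -
  define in_edge where "in_edge = (\<lambda>v. (SOME u. u < v \<and> G (u, v), v))"
  have "in_edge v \<in> {e \<in> vertex_pairs n. G e}" if "v \<in> {..<n} - sources G n" for v
  proof -
    have "\<exists>u. u < v \<and> G (u, v)"
      using that by (auto simp: sources_def)
    then show ?thesis
      using that by (metis (mono_tags, lifting) someI_ex in_edge_def vertex_pairs_def
          mem_Collect_eq case_prodI Diff_iff lessThan_iff)
  qed
  moreover have "inj_on in_edge ({..<n} - sources G n)"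
    by (rule inj_onI) (simp add: in_edge_def)
  ultimately have "card ({..<n} - sources G n) \<le> edge_count G n"
    unfolding edge_count_def using finite_vertex_pairs by (intro card_inj_on_le) auto
  then show ?thesis
    by (simp add: card_Diff_subset finite_subset[OF sources_subset] sources_subset)
qed

lemma bb_nodes_le:
  fixes t :: real
  assumes "best_first_rule sel" "0 < t" "t \<le> 1"
  shows "bb_nodes sel n G \<le> 1 + 2 * real n * (1 + t) ^ n * (1 / t) ^ edge_count G n"
proof -
  let ?d = "n - card (sources G n)"
  have "bb_nodes sel n G \<le> 1 + 2 * card (high_potential_nodes n (card (sources G n)))"
    by (rule bb_nodes_le_high_potential_nodes[OF assms(1) sources_subset indep_sources])
  also have "\<dots> \<le> 1 + 2 * (n * card {D. D \<subseteq> {..<n} \<and> card D \<le> ?d})"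
    using card_high_potential_nodes_le by (intro add_left_mono mult_left_mono) auto
  finally have "real (bb_nodes sel n G) \<le> real (1 + 2 * (n * card {D. D \<subseteq> {..<n} \<and> card D \<le> ?d}))"
    by (simp only: of_nat_le_iff)
  also have "\<dots> = 1 + 2 * real n * card {D. D \<subseteq> {..<n} \<and> card D \<le> ?d}"
    by simp
  also have "\<dots> \<le> 1 + 2 * real n * ((1 + t) ^ n * (1 / t) ^ ?d)"
    using card_small_subsets_le[of "{..<n}" t ?d] assms(2,3)
    by (intro add_left_mono mult_left_mono) (auto simp: field_simps)
  also have "\<dots> \<le> 1 + 2 * real n * ((1 + t) ^ n * (1 / t) ^ edge_count G n)"
    using assms(2,3) card_sources_ge[of n G]
    by (intro add_left_mono mult_left_mono power_increasing) auto
  finally show ?thesis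
    by (simp add: mult_ac)
qed

lemma finite_set_pmf_gnp: "finite (set_pmf (gnp n q))"
  unfolding gnp_def
  by (subst set_Pi_pmf[OF finite_vertex_pairs]) (auto intro: finite_vertex_pairs)

lemma expectation_power_edge_count:
  fixes c :: real
  assumes "0 \<le> c" "0 \<le> q" "q \<le> 1"
  shows "measure_pmf.expectation (gnp n q) (\<lambda>G. c ^ edge_count G n) =
    (1 + q * (c - 1)) ^ card (vertex_pairs n)"
proof -
  have power_edge_count: "c ^ edge_count G n = (\<Prod>e\<in>vertex_pairs n. if G e then c else 1)" for G
    using prod.inter_filter[OF finite_vertex_pairs, where g="\<lambda>_. c" and P=G]
    by (simp add: edge_count_def)
  have "measure_pmf.expectation (gnp n q) (\<lambda>G. c ^ edge_count G n) =
      (\<Prod>e\<in>vertex_pairs n. measure_pmf.expectation (bernoulli_pmf q) (\<lambda>b. if b then c else 1))"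
    unfolding gnp_def power_edge_count
    by (rule expectation_prod_Pi_pmf)
      (auto simp: finite_vertex_pairs assms(1) intro!: integrable_measure_pmf_finite)
  also have "\<dots> = (1 + q * (c - 1)) ^ card (vertex_pairs n)"
    using assms(2,3) by (simp add: algebra_simps)
  finally show ?thesis .
qed

lemma expectation_inverse_power_edge_count_le:
  fixes t q :: real
  assumes t: "0 < t" "t \<le> 1" and q: "0 \<le> q" "q \<le> 1"
  shows "measure_pmf.expectation (gnp n q) (\<lambda>G. (1 / t) ^ edge_count G n)
    \<le> exp (real n * (real n * q / t))"
proof -
  have "(1 + q * (1 / t - 1)) ^ card (vertex_pairs n) \<le> exp (q * (1 / t - 1)) ^ card (vertex_pairs n)"
    using t q by (intro power_mono) (auto simp: add.commute)
  also have "\<dots> \<le> exp (real n * (real n * q / t))"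
  proof -
    have "real (card (vertex_pairs n)) * (q * (1 / t - 1)) \<le> real n * real n * (q / t)"
      using t q card_vertex_pairs_le[of n]
      by (intro mult_mono) (auto simp: field_simps mult_left_le simp flip: of_nat_mult)
    then show ?thesis
      by (simp add: exp_of_nat_mult[symmetric] mult.assoc)
  qed
  finally show ?thesis
    using t q by (simp add: expectation_power_edge_count)
qed

lemma avg_complexity_le:
  fixes t q :: real
  assumes sel: "best_first_rule sel" and t: "0 < t" "t \<le> 1" and q: "0 \<le> q" "q \<le> 1"
  shows "avg_complexity sel n q \<le> (1 + 2 * real n) * exp (real n * (t + real n * q / t))"
proof -
  have "(1 + t) ^ n \<le> exp t ^ n"
    using t by (intro power_mono) (auto simp: add.commute)
  then have growth: "(1 + t) ^ n \<le> exp (real n * t)"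
    by (simp add: exp_of_nat_mult)
  have "avg_complexity sel n q \<le>
      measure_pmf.expectation (gnp n q) (\<lambda>G. 1 + 2 * real n * (1 + t) ^ n * (1 / t) ^ edge_count G n)"
    unfolding avg_complexity_def using bb_nodes_le[OF sel t]
    by (intro integral_mono) (auto intro: integrable_measure_pmf_finite finite_set_pmf_gnp)
  also have "\<dots> = 1 + 2 * real n * (1 + t) ^ n *
      measure_pmf.expectation (gnp n q) (\<lambda>G. (1 / t) ^ edge_count G n)"
    by (simp add: integrable_measure_pmf_finite[OF finite_set_pmf_gnp])
  also have "\<dots> \<le> 1 + 2 * real n * exp (real n * t) * exp (real n * (real n * q / t))"
    using growth expectation_inverse_power_edge_count_le[OF t q] t
    by (intro add_left_mono mult_mono mult_left_mono) auto
  also have "\<dots> = 1 + 2 * real n * exp (real n * (t + real n * q / t))"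
    by (simp only: distrib_left exp_add mult.assoc)
  also have "\<dots> \<le> (1 + 2 * real n) * exp (real n * (t + real n * q / t))"
    using t q by (simp add: distrib_right)
  finally show ?thesis .
qed

lemma eventually_linear_le_exp:
  fixes c :: real
  assumes "0 < c"
  shows "\<forall>\<^sub>F n in sequentially. 1 + 2 * real n \<le> exp (c * real n)"
proof (rule eventually_sequentiallyI)
  fix n :: nat
  assume "nat \<lceil>4 / c\<^sup>2\<rceil> \<le> n"
  then have "4 / c\<^sup>2 \<le> real n"
    by linarith
  then have "4 \<le> c\<^sup>2 * real n"
    using assms by (simp add: field_simps)
  then have "real n * 4 \<le> real n * (c\<^sup>2 * real n)"
    by (intro mult_left_mono) auto
  moreover have "(c * real n)\<^sup>2 / 2 = real n * (c\<^sup>2 * real n) / 2"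
    by (simp add: power2_eq_square)
  ultimately have "2 * real n \<le> c * real n + (c * real n)\<^sup>2 / 2"
    using assms mult_nonneg_nonneg[of c "real n"] by linarith
  also have "1 + \<dots> \<le> exp (c * real n)"
    using assms by (intro order_trans[OF _ exp_lower_Taylor_quadratic]) auto
  finally show "1 + 2 * real n \<le> exp (c * real n)"
    by simp
qed

lemma subexponential_of_parametric_bound:
  fixes f p :: "nat \<Rightarrow> real"
  assumes np: "(\<lambda>n. real n * p n) \<longlonglongrightarrow> 0"
    and bound: "\<And>t n. 0 < t \<Longrightarrow> t \<le> 1 \<Longrightarrow> f n \<le> (1 + 2 * real n) * exp (real n * (t + real n * p n / t))"
  shows "subexponential f"
  unfolding subexponential_def
proof (intro allI impI)
  fix e :: real
  assume "0 < e"
  define t where "t = min 1 (e / 4)"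
  have t: "0 < t" "t \<le> 1" "t \<le> e / 4"
    using \<open>0 < e\<close> by (auto simp: t_def)
  have "\<forall>\<^sub>F n in sequentially. real n * p n < t * (e / 4)"
    using order_tendstoD(2)[OF np, of "t * (e / 4)"] t \<open>0 < e\<close> by simp
  moreover have "\<forall>\<^sub>F n in sequentially. 1 + 2 * real n \<le> exp (e / 2 * real n)"
    using \<open>0 < e\<close> by (intro eventually_linear_le_exp) simp
  ultimately show "\<forall>\<^sub>F n in sequentially. f n \<le> exp (e * real n)"
  proof eventually_elim
    case (elim n)
    have "real n * p n / t \<le> e / 4"
      using elim(1) t by (simp add: pos_divide_le_eq mult.commute)
    then have "t + real n * p n / t \<le> e / 2"
      using t(3) by linarith
    then have "real n * (t + real n * p n / t) \<le> real n * (e / 2)"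
      by (intro mult_left_mono) auto
    then have "exp (real n * (t + real n * p n / t)) \<le> exp (e / 2 * real n)"
      by (simp add: mult.commute)
    then have "f n \<le> exp (e / 2 * real n) * exp (e / 2 * real n)"
      using bound[OF t(1,2), of n] elim(2) by (meson exp_ge_zero mult_mono order_trans)
    then show ?case
      by (simp flip: exp_add)
  qed
qed

theorem theorem3:
  fixes p :: "nat \<Rightarrow> real" and sel :: "nat \<Rightarrow> bbnode set \<Rightarrow> bbnode"
  assumes "\<And>n. 0 \<le> p n" and "\<And>n. p n \<le> 1"
    and "(\<lambda>n. real n * p n) \<longlonglongrightarrow> 0"
    and "best_first_rule sel"
  shows "subexponential (\<lambda>n. avg_complexity sel n (p n))"
  using assms(3)
proof (rule subexponential_of_parametric_bound)
  fix t :: real and n :: nat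
  assume "0 < t" "t \<le> 1"
  then show "avg_complexity sel n (p n) \<le> (1 + 2 * real n) * exp (real n * (t + real n * p n / t))"
    using avg_complexity_le[OF assms(4) _ _ assms(1,2)] by blast
qed

end
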